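(* Let $A$ and $B$ be rings, $f: A\to B$ a ring homomorphism and $J$ a proper ideal of $B$ such that the ideal $f^{-1}(J)$ of $A$ is semicommutative. If $f(A)+J$ is a weak Armendariz ring, then $A\bowtie^{f}J$ is a weak Armendariz ring.
   Context: All rings are associative with identity (not necessarily commutative), ring homomorphisms are unital, and ideals are two-sided. $\mathrm{nil}(R)$ denotes the set of nilpotent elements of a ring $R$. For a ring homomorphism $f:A\to B$ and an ideal $J$ of $B$, the amalgamation is the subring $A\bowtie^{f}J=\{(a,f(a)+j)\mid a\in A,\ j\in J\}$ of $A\times B$; $f(A)+J=\{f(a)+j: a\in A, j\in J\}$ is a subring of $B$. A ring $R$ (possibly without identity, e.g. an ideal regarded as a ring) is semicommutative if for all $a,b\in R$, $ab=0$ implies $aRb=0$. A ring $R$ is weak Armendariz if whenever $p(x)=\sum_{i=0}^n a_ix^i$ and $q(x)=\sum_{j=0}^m b_jx^j$ in $R[x]$ satisfy $p(x)q(x)=0$, then $a_ib_j\in\mathrm{nil}(R)$ for all $i,j$. *)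

theory Defs
  imports "HOL-Algebra.Algebra"
begin

definition nilpotents :: "('a, 'm) ring_scheme \<Rightarrow> 'a set" where
  "nilpotents R = {a \<in> carrier R. \<exists>n::nat. a [^]\<^bsub>R\<^esub> n = \<zero>\<^bsub>R\<^esub>}"

definition semicommutative :: "('a, 'm) ring_scheme \<Rightarrow> bool" where
  "semicommutative R \<longleftrightarrow>
     (\<forall>a\<in>carrier R. \<forall>b\<in>carrier R. a \<otimes>\<^bsub>R\<^esub> b = \<zero>\<^bsub>R\<^esub> \<longrightarrow>
        (\<forall>r\<in>carrier R. a \<otimes>\<^bsub>R\<^esub> r \<otimes>\<^bsub>R\<^esub> b = \<zero>\<^bsub>R\<^esub>))"

definition weak_armendariz :: "('a, 'm) ring_scheme \<Rightarrow> bool" where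
  "weak_armendariz R \<longleftrightarrow>
     (\<forall>p\<in>carrier (UP R). \<forall>q\<in>carrier (UP R).
        p \<otimes>\<^bsub>UP R\<^esub> q = \<zero>\<^bsub>UP R\<^esub> \<longrightarrow>
        (\<forall>i j. coeff (UP R) p i \<otimes>\<^bsub>R\<^esub> coeff (UP R) q j \<in> nilpotents R))"

definition img_plus :: "('a, 'm) ring_scheme \<Rightarrow> ('b, 'n) ring_scheme \<Rightarrow> ('a \<Rightarrow> 'b) \<Rightarrow> 'b set
    \<Rightarrow> ('b, 'n) ring_scheme" where
  "img_plus A B f J = B\<lparr>carrier := {f a \<oplus>\<^bsub>B\<^esub> j | a j. a \<in> carrier A \<and> j \<in> J}\<rparr>"

definition amalgamation :: "('a, 'm) ring_scheme \<Rightarrow> ('b, 'n) ring_scheme \<Rightarrow> ('a \<Rightarrow> 'b) \<Rightarrow> 'b set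
    \<Rightarrow> ('a \<times> 'b) ring" where
  "amalgamation A B f J = \<lparr>
     carrier = {(a, f a \<oplus>\<^bsub>B\<^esub> j) | a j. a \<in> carrier A \<and> j \<in> J},
     Group.monoid.mult = (\<lambda>x y. (fst x \<otimes>\<^bsub>A\<^esub> fst y, snd x \<otimes>\<^bsub>B\<^esub> snd y)),
     one = (\<one>\<^bsub>A\<^esub>, \<one>\<^bsub>B\<^esub>),
     Ring.ring.zero = (\<zero>\<^bsub>A\<^esub>, \<zero>\<^bsub>B\<^esub>),
     Ring.ring.add = (\<lambda>x y. (fst x \<oplus>\<^bsub>A\<^esub> fst y, snd x \<oplus>\<^bsub>B\<^esub> snd y)) \<rparr>"

end

theory Submission
  imports Defs
begin

text \<open>
  Let \<open>P \<otimes> Q = 0\<close> over \<open>A \<bowtie>\<^sup>f J\<close>. The second coordinates of \<open>P\<close> and \<open>Q\<close> are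
  polynomials over \<open>f(A) + J\<close> with product zero, so the second coordinate of \<open>P\<^sub>i Q\<^sub>j\<close> is
  nilpotent, of index \<open>m\<close> say. It is congruent modulo \<open>J\<close> to \<open>f c\<close>, where \<open>c = a\<^sub>i b\<^sub>j\<close> is
  the first coordinate, so \<open>c\<^sup>m\<close> lies in \<open>I = f\<^sup>-\<^sup>1(J)\<close>. The first coordinates \<open>a\<^sub>k\<close>, \<open>b\<^sub>k\<close>
  have vanishing convolution, hence so do \<open>c\<^sup>m a\<^sub>k\<close> and \<open>b\<^sub>k c\<^sup>m\<close>, which lie in \<open>I\<close>. In the
  semicommutative ring \<open>I\<close> the nilpotent elements are closed under addition and under
  multiplication by elements of \<open>I\<close>, and this forces all products of coefficients of such a
  pair to be nilpotent (the argument of Liu and Zhao showing that semicommutative rings are weak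
  Armendariz). Thus \<open>c\<^sup>2\<^sup>m\<^sup>+\<^sup>1\<close>, hence \<open>c\<close>, hence \<open>P\<^sub>i Q\<^sub>j\<close> is nilpotent.
\<close>

lemma (in monoid) nat_pow_Suc_mult_shift:
  assumes "a \<in> carrier G" "b \<in> carrier G"
  shows "(a \<otimes> b) [^] Suc n = a \<otimes> (b \<otimes> a) [^] n \<otimes> b"
proof (induction n)
  case 0
  then show ?case using assms by simp
next
  case (Suc n)
  have "(a \<otimes> b) [^] Suc (Suc n) = a \<otimes> (b \<otimes> a) [^] n \<otimes> b \<otimes> (a \<otimes> b)"
    using Suc by simp
  also have "\<dots> = a \<otimes> ((b \<otimes> a) [^] n \<otimes> (b \<otimes> a)) \<otimes> b"
    using assms by (simp add: m_assoc)
  finally show ?case by simp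
qed

context ring
begin

lemma nat_pow_eq_zero_mono:
  assumes "x \<in> carrier R" "x [^] n = \<zero>" "n \<le> (k::nat)"
  shows "x [^] k = \<zero>"
proof -
  have "x [^] k = x [^] n \<otimes> x [^] (k - n)"
    using assms(1,3) by (simp add: nat_pow_mult)
  also have "\<dots> = \<zero>"
    using assms by simp
  finally show ?thesis .
qed

lemma nilpotentsI: "x \<in> carrier R \<Longrightarrow> x [^] (n::nat) = \<zero> \<Longrightarrow> x \<in> nilpotents R"
  unfolding nilpotents_def by blast

lemma nilpotents_SucE:
  assumes "x \<in> nilpotents R"
  obtains n where "x [^] Suc n = \<zero>"
proof -
  obtain n where "x \<in> carrier R" "x [^] (n::nat) = \<zero>"
    using assms unfolding nilpotents_def by blast
  then have "x [^] Suc n = \<zero>"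
    by (rule nat_pow_eq_zero_mono) simp
  then show thesis
    by (rule that)
qed

lemma zero_in_nilpotents: "\<zero> \<in> nilpotents R"
  by (rule nilpotentsI[of _ 1]) simp_all

lemma nilpotents_uminus:
  assumes "x \<in> nilpotents R"
  shows "\<ominus> x \<in> nilpotents R"
proof -
  obtain n where x: "x \<in> carrier R" "x [^] (n::nat) = \<zero>"
    using assms unfolding nilpotents_def by blast
  have "\<ominus> \<one> \<otimes> x = x \<otimes> \<ominus> \<one>" "\<ominus> x = \<ominus> \<one> \<otimes> x"
    using x by (simp_all add: l_minus r_minus)
  then have "(\<ominus> x) [^] n = (\<ominus> \<one>) [^] n \<otimes> x [^] n"
    using x by (simp add: pow_mult_distrib)
  then show ?thesis
    using x by (intro nilpotentsI[of _ n]) simp_all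
qed

lemma nilpotents_of_nat_pow:
  assumes "x \<in> carrier R" "x [^] (k::nat) \<in> nilpotents R"
  shows "x \<in> nilpotents R"
proof -
  obtain n where "(x [^] k) [^] (n::nat) = \<zero>"
    using assms(2) unfolding nilpotents_def by blast
  then have "x [^] (k * n) = \<zero>"
    using assms(1) by (simp add: nat_pow_pow)
  then show ?thesis
    using assms(1) by (rule nilpotentsI[rotated])
qed

lemma nilpotents_mult_swap:
  assumes "a \<in> carrier R" "b \<in> carrier R" "a \<otimes> b \<in> nilpotents R"
  shows "b \<otimes> a \<in> nilpotents R"
proof -
  obtain n where "(a \<otimes> b) [^] (n::nat) = \<zero>"
    using assms(3) unfolding nilpotents_def by blast
  then have "(b \<otimes> a) [^] Suc n = \<zero>"
    using nat_pow_Suc_mult_shift[of b a n] assms by simp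
  then show ?thesis
    using assms by (intro nilpotentsI[of _ "Suc n"]) simp_all
qed

end

inductive xy_word :: "('a, 'm) monoid_scheme \<Rightarrow> 'a \<Rightarrow> 'a \<Rightarrow> nat \<Rightarrow> nat \<Rightarrow> 'a \<Rightarrow> bool"
  for R x y where
  letter_x: "xy_word R x y 1 0 x"
| letter_y: "xy_word R x y 0 1 y"
| append_x: "xy_word R x y a b w \<Longrightarrow> xy_word R x y (Suc a) b (w \<otimes>\<^bsub>R\<^esub> x)"
| append_y: "xy_word R x y a b w \<Longrightarrow> xy_word R x y a (Suc b) (w \<otimes>\<^bsub>R\<^esub> y)"

lemma xy_word_swap: "xy_word R x y a b w \<Longrightarrow> xy_word R y x b a w"
proof (induction rule: xy_word.induct)
  case letter_x
  show ?case by (rule xy_word.letter_y)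
next
  case letter_y
  show ?case by (rule xy_word.letter_x)
next
  case append_x
  from append_x.IH show ?case by (rule xy_word.append_y)
next
  case append_y
  from append_y.IH show ?case by (rule xy_word.append_x)
qed

inductive xy_sum :: "('a, 'm) ring_scheme \<Rightarrow> 'a \<Rightarrow> 'a \<Rightarrow> nat \<Rightarrow> 'a \<Rightarrow> bool"
  for R x y K where
  word: "xy_word R x y a b w \<Longrightarrow> a + b = K \<Longrightarrow> xy_sum R x y K w"
| add: "xy_sum R x y K z \<Longrightarrow> xy_sum R x y K z' \<Longrightarrow> xy_sum R x y K (z \<oplus>\<^bsub>R\<^esub> z')"

locale semicommutative_subrng = ring R for R (structure) +
  fixes I :: "'a set"
  assumes I_subset: "I \<subseteq> carrier R"
    and I_zero_closed: "\<zero> \<in> I"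
    and I_add_closed: "\<lbrakk>a \<in> I; b \<in> I\<rbrakk> \<Longrightarrow> a \<oplus> b \<in> I"
    and I_mult_closed: "\<lbrakk>a \<in> I; b \<in> I\<rbrakk> \<Longrightarrow> a \<otimes> b \<in> I"
    and I_semicommutative: "semicommutative (R\<lparr>carrier := I\<rparr>)"

lemma (in ring) semicommutative_subrng_ideal:
  "\<lbrakk>ideal I R; semicommutative (R\<lparr>carrier := I\<rparr>)\<rbrakk> \<Longrightarrow> semicommutative_subrng R I"
  by unfold_locales
    (auto simp: ideal.Icarr additive_subgroup.zero_closed ideal_def additive_subgroup.a_closed
      ideal.I_r_closed)

context semicommutative_subrng
begin

lemma I_carrier: "a \<in> I \<Longrightarrow> a \<in> carrier R"
  using I_subset by blast

lemma I_semicommutativeD: "\<lbrakk>a \<in> I; b \<in> I; r \<in> I; a \<otimes> b = \<zero>\<rbrakk> \<Longrightarrow> a \<otimes> r \<otimes> b = \<zero>"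
  using I_semicommutative unfolding semicommutative_def by simp

lemma I_nat_pow_Suc_closed: "x \<in> I \<Longrightarrow> x [^] Suc k \<in> I"
  by (induction k) (simp_all add: I_carrier I_mult_closed)

lemma xy_word_closed:
  assumes "x \<in> I" "y \<in> I"
  shows "xy_word R x y a b w \<Longrightarrow> w \<in> I"
  by (induction rule: xy_word.induct) (simp_all add: assms I_mult_closed)

lemma xy_sum_closed:
  assumes "x \<in> I" "y \<in> I"
  shows "xy_sum R x y K z \<Longrightarrow> z \<in> I"
proof (induction rule: xy_sum.induct)
  case (word a b w)
  from word(1) show ?case by (rule xy_word_closed[OF assms])
next
  case (add z z')
  from add.IH show ?case by (rule I_add_closed)
qed

text \<open>
  A word with \<open>a\<close> letters \<open>x\<close> is annihilated on the right by the \<open>x\<close>-power that would complete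
  \<open>x [^] Suc n = \<zero>\<close>: appending \<open>x\<close> moves a factor from the power into the word, and
  appending \<open>y\<close> is harmless by semicommutativity. Once \<open>a > n\<close> the truncated exponent is
  \<open>0\<close>, so the word itself vanishes.
\<close>
lemma xy_word_annihilated:
  assumes x: "x \<in> I" and y: "y \<in> I" and nil: "x [^] Suc n = \<zero>"
  shows "xy_word R x y a b w \<Longrightarrow> w \<otimes> x [^] (Suc n - a) = \<zero>"
proof (induction rule: xy_word.induct)
  case letter_x
  then show ?case
    using nil x by (simp add: I_carrier nat_pow_Suc2[symmetric])
next
  case letter_y
  then show ?case
    using nil y by (simp add: I_carrier)
next
  case (append_x a b w)
  have w: "w \<in> carrier R"
    using xy_word_closed[OF x y append_x.hyps] by (rule I_carrier)
  show ?case
  proof (cases "a < Suc n")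
    case True
    then have "x [^] (Suc n - a) = x \<otimes> x [^] (Suc n - Suc a)"
      using x nat_pow_Suc2[of x "n - a"] by (simp add: I_carrier Suc_diff_le)
    then show ?thesis
      using append_x.IH w x by (simp add: I_carrier m_assoc)
  next
    case False
    then show ?thesis
      using append_x.IH w x by (simp add: I_carrier)
  qed
next
  case (append_y a b w)
  have w: "w \<in> I"
    using xy_word_closed[OF x y append_y.hyps] .
  show ?case
  proof (cases "a < Suc n")
    case True
    then have "Suc n - a = Suc (n - a)"
      by simp
    then show ?thesis
      using I_semicommutativeD[OF w I_nat_pow_Suc_closed[OF x] y] append_y.IH by simp
  next
    case False
    then show ?thesis
      using append_y.IH w y by (simp add: I_carrier)
  qed
qed

lemma xy_word_eq_zero:
  assumes x: "x \<in> I" and y: "y \<in> I" and nil: "x [^] Suc n = \<zero>"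
    and w: "xy_word R x y a b w" and a: "n < a"
  shows "w = \<zero>"
proof -
  have "w \<otimes> x [^] (Suc n - a) = \<zero>"
    by (rule xy_word_annihilated[OF x y nil w])
  then show ?thesis
    using a I_carrier[OF xy_word_closed[OF x y w]] by simp
qed

lemma xy_word_mult_nat_pow:
  assumes "x \<in> carrier R" "y \<in> carrier R"
  shows "xy_word R x y (Suc k) (Suc k) ((x \<otimes> y) [^] Suc k)"
proof (induction k)
  case 0
  then show ?case
    using assms xy_word.append_y[OF xy_word.letter_x] by simp
next
  case (Suc k)
  then have "xy_word R x y (Suc (Suc k)) (Suc (Suc k)) ((x \<otimes> y) [^] Suc k \<otimes> x \<otimes> y)"
    by (rule xy_word.append_y[OF xy_word.append_x])
  then show ?case
    using assms by (simp add: m_assoc del: nat_pow_Suc add: nat_pow_Suc[of _ "Suc k"])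
qed

lemma nilpotents_mult_right:
  assumes x: "x \<in> I" "x \<in> nilpotents R" and r: "r \<in> I"
  shows "x \<otimes> r \<in> nilpotents R"
proof -
  obtain n where "x [^] Suc n = \<zero>"
    using x(2) by (rule nilpotents_SucE)
  then have "(x \<otimes> r) [^] Suc n = \<zero>"
    using xy_word_eq_zero[OF x(1) r _ xy_word_mult_nat_pow] x r by (simp add: I_carrier)
  then show ?thesis
    by (rule nilpotentsI[rotated]) (simp add: x r I_carrier)
qed

lemma nilpotents_mult_left:
  assumes "x \<in> I" "x \<in> nilpotents R" "r \<in> I"
  shows "r \<otimes> x \<in> nilpotents R"
  using nilpotents_mult_swap[OF I_carrier[OF assms(1)] I_carrier[OF assms(3)]
      nilpotents_mult_right[OF assms]] .

lemma xy_sum_mult: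
  assumes x: "x \<in> I" and y: "y \<in> I"
  shows "xy_sum R x y K z \<Longrightarrow> xy_sum R x y (Suc K) (z \<otimes> (x \<oplus> y))"
proof (induction rule: xy_sum.induct)
  case (word a b w)
  have "w \<otimes> (x \<oplus> y) = w \<otimes> x \<oplus> w \<otimes> y"
    using xy_word_closed[OF x y word.hyps(1)] x y by (simp add: I_carrier r_distr)
  then show ?case
    using xy_sum.add[OF xy_sum.word[OF xy_word.append_x[OF word(1)]]
        xy_sum.word[OF xy_word.append_y[OF word(1)]]] word(2) by simp
next
  case (add z z')
  have "(z \<oplus> z') \<otimes> (x \<oplus> y) = z \<otimes> (x \<oplus> y) \<oplus> z' \<otimes> (x \<oplus> y)"
    using xy_sum_closed[OF x y add.hyps(1)] xy_sum_closed[OF x y add.hyps(2)] x y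
    by (simp add: I_carrier l_distr)
  then show ?case
    using xy_sum.add[OF add.IH] by simp
qed

lemma xy_sum_add_nat_pow:
  assumes x: "x \<in> I" and y: "y \<in> I"
  shows "xy_sum R x y (Suc K) ((x \<oplus> y) [^] Suc K)"
proof (induction K)
  case 0
  have "xy_sum R x y 1 (x \<oplus> y)"
    by (intro xy_sum.add xy_sum.word[OF xy_word.letter_x] xy_sum.word[OF xy_word.letter_y]) simp_all
  then show ?case
    using x y by (simp add: I_carrier)
next
  case (Suc K)
  then show ?case
    using xy_sum_mult[OF x y] by simp
qed

lemma xy_sum_eq_zero:
  assumes x: "x \<in> I" "x [^] Suc n = \<zero>" and y: "y \<in> I" "y [^] Suc m = \<zero>"
  shows "xy_sum R x y (Suc n + Suc m) z \<Longrightarrow> z = \<zero>"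
proof (induction rule: xy_sum.induct)
  case (word a b w)
  then consider "n < a" | "m < b"
    by linarith
  then show ?case
    using xy_word_eq_zero[OF x(1) y(1) x(2) word(1)]
      xy_word_eq_zero[OF y(1) x(1) y(2) xy_word_swap[OF word(1)]]
    by cases simp_all
next
  case (add z z')
  then show ?case
    by simp
qed

lemma nilpotents_add:
  assumes x: "x \<in> I" "x \<in> nilpotents R" and y: "y \<in> I" "y \<in> nilpotents R"
  shows "x \<oplus> y \<in> nilpotents R"
proof -
  obtain n where n: "x [^] Suc n = \<zero>"
    using x(2) by (rule nilpotents_SucE)
  obtain m where m: "y [^] Suc m = \<zero>"
    using y(2) by (rule nilpotents_SucE)
  have "xy_sum R x y (Suc n + Suc m) ((x \<oplus> y) [^] (Suc n + Suc m))"
    using xy_sum_add_nat_pow[OF x(1) y(1), of "n + Suc m"] by simp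
  then have "(x \<oplus> y) [^] (Suc n + Suc m) = \<zero>"
    by (rule xy_sum_eq_zero[OF x(1) n y(1) m])
  then show ?thesis
    by (rule nilpotentsI[rotated]) (simp add: x y I_carrier)
qed

lemma finsum_in_I_nilpotents:
  assumes "finite S" "g \<in> S \<rightarrow> I \<inter> nilpotents R"
  shows "finsum R g S \<in> I \<inter> nilpotents R"
  using assms
proof (induction S rule: finite_induct)
  case empty
  then show ?case
    by (simp add: I_zero_closed zero_in_nilpotents)
next
  case (insert k S)
  have "g \<in> S \<rightarrow> carrier R" "g k \<in> carrier R"
    using insert.prems I_subset by auto
  then have "finsum R g (insert k S) = g k \<oplus> finsum R g S"
    using insert.hyps by (simp add: finsum_insert)
  then show ?case
    using insert by (simp add: I_add_closed nilpotents_add)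
qed

lemma convolution_term_nilpotent:
  fixes \<alpha> \<beta> :: "nat \<Rightarrow> 'a"
  assumes \<alpha>: "\<And>k. \<alpha> k \<in> I" and \<beta>: "\<And>k. \<beta> k \<in> I"
    and conv: "(\<Oplus>k\<in>{..n}. \<alpha> k \<otimes> \<beta> (n - k)) = \<zero>" and t: "t \<le> n"
    and others: "\<And>k. \<lbrakk>k \<le> n; k \<noteq> t\<rbrakk> \<Longrightarrow> \<alpha> k \<otimes> \<beta> (n - k) \<otimes> \<alpha> t \<in> nilpotents R"
  shows "\<alpha> t \<otimes> \<beta> (n - t) \<in> nilpotents R"
proof -
  define g where "g k = \<alpha> k \<otimes> \<beta> (n - k) \<otimes> \<alpha> t" for k
  have g: "g k \<in> I" for k
    unfolding g_def by (simp add: \<alpha> \<beta> I_mult_closed)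
  have rest: "(\<Oplus>k\<in>{..n} - {t}. g k) \<in> I \<inter> nilpotents R"
    using g others by (intro finsum_in_I_nilpotents) (auto simp: g_def)
  have "(\<Oplus>k\<in>{..n}. g k) = (\<Oplus>k\<in>{..n}. \<alpha> k \<otimes> \<beta> (n - k)) \<otimes> \<alpha> t"
    unfolding g_def using \<alpha> \<beta> by (intro finsum_ldistr[symmetric]) (auto simp: I_carrier)
  also have "\<dots> = \<zero>"
    using conv \<alpha> by (simp add: I_carrier)
  moreover have "(\<Oplus>k\<in>{..n}. g k) = (\<Oplus>k\<in>insert t ({..n} - {t}). g k)"
    using t by (simp add: insert_absorb)
  moreover have "\<dots> = g t \<oplus> (\<Oplus>k\<in>{..n} - {t}. g k)"
    using I_carrier[OF g] by (intro finsum_insert) auto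
  ultimately have "g t \<oplus> (\<Oplus>k\<in>{..n} - {t}. g k) = \<zero>"
    by simp
  then have "g t = \<ominus> (\<Oplus>k\<in>{..n} - {t}. g k)"
    using g rest by (intro minus_equality[symmetric]) (auto simp: I_carrier)
  then have "g t \<in> nilpotents R"
    using rest nilpotents_uminus by simp
  then have "g t \<otimes> \<beta> (n - t) \<in> nilpotents R"
    by (rule nilpotents_mult_right[OF g _ \<beta>])
  also have "g t \<otimes> \<beta> (n - t) = (\<alpha> t \<otimes> \<beta> (n - t)) [^] (2::nat)"
    unfolding g_def using \<alpha> \<beta> by (simp add: I_carrier numeral_2_eq_2 m_assoc)
  finally show ?thesis
    by (rule nilpotents_of_nat_pow[rotated]) (simp add: \<alpha> \<beta> I_carrier)
qed

text \<open>
  Induction on the degree \<open>n\<close> and, inside it, on \<open>t\<close>: in the convolution of degree \<open>n\<close>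
  multiplied by \<open>\<alpha> t\<close>, a term with \<open>k < t\<close> is nilpotent by the inner hypothesis, and a term
  with \<open>k > t\<close> because \<open>\<alpha> t \<otimes> \<beta> (n - k)\<close> has degree \<open>t + (n - k) < n\<close>.
\<close>
theorem nilpotents_of_convolution_eq_zero:
  fixes \<alpha> \<beta> :: "nat \<Rightarrow> 'a"
  assumes \<alpha>: "\<And>k. \<alpha> k \<in> I" and \<beta>: "\<And>k. \<beta> k \<in> I"
    and conv: "\<And>n. (\<Oplus>k\<in>{..n}. \<alpha> k \<otimes> \<beta> (n - k)) = \<zero>"
  shows "\<alpha> i \<otimes> \<beta> j \<in> nilpotents R"
proof -
  have "\<alpha> t \<otimes> \<beta> (n - t) \<in> nilpotents R" if "t \<le> n" for n t
    using that
  proof (induction n arbitrary: t rule: less_induct)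
    case (less n)
    note outer_IH = less.IH
    show ?case
      using less.prems
    proof (induction t rule: less_induct)
      case (less t)
      show ?case
      proof (rule convolution_term_nilpotent[OF \<alpha> \<beta> conv less.prems])
        fix k
        assume k: "k \<le> n" "k \<noteq> t"
        show "\<alpha> k \<otimes> \<beta> (n - k) \<otimes> \<alpha> t \<in> nilpotents R"
        proof (cases "k < t")
          case True
          then show ?thesis
            using less.IH less.prems \<alpha> \<beta> by (simp add: nilpotents_mult_right I_mult_closed)
        next
          case False
          then have "\<alpha> t \<otimes> \<beta> (t + (n - k) - t) \<in> nilpotents R"
            using k less.prems by (intro outer_IH) auto
          then have "\<beta> (n - k) \<otimes> \<alpha> t \<in> nilpotents R"
            using \<alpha> \<beta> by (simp add: nilpotents_mult_swap I_carrier)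
          then have "\<alpha> k \<otimes> (\<beta> (n - k) \<otimes> \<alpha> t) \<in> nilpotents R"
            using \<alpha> \<beta> by (simp add: nilpotents_mult_left I_mult_closed)
          then show ?thesis
            using \<alpha> \<beta> by (simp add: m_assoc I_carrier)
        qed
      qed
    qed
  qed
  from this[of i "i + j"] show ?thesis
    by simp
qed

lemma nilpotents_of_convolution_eq_zero_pow_in_ideal:
  fixes a b :: "nat \<Rightarrow> 'a"
  assumes I: "ideal I R" and a: "\<And>k. a k \<in> carrier R" and b: "\<And>k. b k \<in> carrier R"
    and conv: "\<And>n. (\<Oplus>k\<in>{..n}. a k \<otimes> b (n - k)) = \<zero>"
    and pow: "(a i \<otimes> b j) [^] (m::nat) \<in> I"
  shows "a i \<otimes> b j \<in> nilpotents R"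
proof -
  interpret I: ideal I R by (rule I)
  define u where "u = (a i \<otimes> b j) [^] m"
  have u: "u \<in> I" "u \<in> carrier R"
    using pow by (simp_all add: u_def)
  have "u \<otimes> a i \<otimes> (b j \<otimes> u) \<in> nilpotents R"
  proof (rule nilpotents_of_convolution_eq_zero)
    show "u \<otimes> a k \<in> I" "b k \<otimes> u \<in> I" for k
      using u a b by (simp_all add: I.I_l_closed I.I_r_closed)
    fix n
    have "(\<Oplus>k\<in>{..n}. u \<otimes> a k \<otimes> (b (n - k) \<otimes> u)) = (\<Oplus>k\<in>{..n}. u \<otimes> (a k \<otimes> b (n - k)) \<otimes> u)"
      using u a b by (intro finsum_cong') (auto simp: m_assoc)
    also have "\<dots> = u \<otimes> (\<Oplus>k\<in>{..n}. a k \<otimes> b (n - k)) \<otimes> u"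
      using u a b by (simp add: finsum_ldistr finsum_rdistr)
    finally show "(\<Oplus>k\<in>{..n}. u \<otimes> a k \<otimes> (b (n - k) \<otimes> u)) = \<zero>"
      using conv u by simp
  qed
  also have "u \<otimes> a i \<otimes> (b j \<otimes> u) = (a i \<otimes> b j) [^] Suc m \<otimes> (a i \<otimes> b j) [^] m"
    using a b by (simp add: u_def m_assoc)
  also have "\<dots> = (a i \<otimes> b j) [^] (Suc m + m)"
    by (rule nat_pow_mult) (simp add: a b)
  finally show ?thesis
    by (rule nilpotents_of_nat_pow[rotated]) (simp add: a b)
qed

end

lemma UP_mult_apply:
  "\<lbrakk>p \<in> carrier (UP R); q \<in> carrier (UP R)\<rbrakk> \<Longrightarrow>
    (p \<otimes>\<^bsub>UP R\<^esub> q) n = (\<Oplus>\<^bsub>R\<^esub>k\<in>{..n}. p k \<otimes>\<^bsub>R\<^esub> q (n - k))"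
  by (simp add: UP_def)

lemma UP_zero_eq: "\<zero>\<^bsub>UP R\<^esub> = (\<lambda>_. \<zero>\<^bsub>R\<^esub>)"
  by (simp add: UP_def)

lemma UP_mult_eq_zeroD:
  assumes "p \<in> carrier (UP R)" "q \<in> carrier (UP R)" "p \<otimes>\<^bsub>UP R\<^esub> q = \<zero>\<^bsub>UP R\<^esub>"
  shows "(\<Oplus>\<^bsub>R\<^esub>k\<in>{..n}. p k \<otimes>\<^bsub>R\<^esub> q (n - k)) = \<zero>\<^bsub>R\<^esub>"
  using UP_mult_apply[OF assms(1,2), of n] assms(3) by (simp add: UP_zero_eq)

lemma weak_armendariz_iff:
  "weak_armendariz R \<longleftrightarrow>
     (\<forall>p\<in>carrier (UP R). \<forall>q\<in>carrier (UP R). p \<otimes>\<^bsub>UP R\<^esub> q = \<zero>\<^bsub>UP R\<^esub> \<longrightarrow>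
        (\<forall>i j. p i \<otimes>\<^bsub>R\<^esub> q j \<in> nilpotents R))"
  by (simp add: weak_armendariz_def UP_def)

lemma amalgamation_eq:
  "amalgamation A B f J = (RDirProd A B)\<lparr>carrier := {(a, f a \<oplus>\<^bsub>B\<^esub> j) | a j. a \<in> carrier A \<and> j \<in> J}\<rparr>"
  unfolding amalgamation_def RDirProd_def DirProd_def by (simp add: monoid.defs case_prod_beta')

lemma RDirProd_simps:
  "x \<otimes>\<^bsub>RDirProd A B\<^esub> y = (fst x \<otimes>\<^bsub>A\<^esub> fst y, snd x \<otimes>\<^bsub>B\<^esub> snd y)"
  "x \<oplus>\<^bsub>RDirProd A B\<^esub> y = (fst x \<oplus>\<^bsub>A\<^esub> fst y, snd x \<oplus>\<^bsub>B\<^esub> snd y)"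
  "\<one>\<^bsub>RDirProd A B\<^esub> = (\<one>\<^bsub>A\<^esub>, \<one>\<^bsub>B\<^esub>)"
  "\<zero>\<^bsub>RDirProd A B\<^esub> = (\<zero>\<^bsub>A\<^esub>, \<zero>\<^bsub>B\<^esub>)"
  by (simp_all add: RDirProd_def DirProd_def monoid.defs case_prod_beta')

lemma amalgamation_simps [simp]:
  "x \<otimes>\<^bsub>amalgamation A B f J\<^esub> y = (fst x \<otimes>\<^bsub>A\<^esub> fst y, snd x \<otimes>\<^bsub>B\<^esub> snd y)"
  "x \<oplus>\<^bsub>amalgamation A B f J\<^esub> y = (fst x \<oplus>\<^bsub>A\<^esub> fst y, snd x \<oplus>\<^bsub>B\<^esub> snd y)"
  "\<one>\<^bsub>amalgamation A B f J\<^esub> = (\<one>\<^bsub>A\<^esub>, \<one>\<^bsub>B\<^esub>)"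
  "\<zero>\<^bsub>amalgamation A B f J\<^esub> = (\<zero>\<^bsub>A\<^esub>, \<zero>\<^bsub>B\<^esub>)"
  by (simp_all add: amalgamation_def)

lemma amalgamation_nat_pow:
  "x [^]\<^bsub>amalgamation A B f J\<^esub> (n::nat) = (fst x [^]\<^bsub>A\<^esub> n, snd x [^]\<^bsub>B\<^esub> n)"
  by (induction n) simp_all

lemma img_plus_simps [simp]:
  "x \<otimes>\<^bsub>img_plus A B f J\<^esub> y = x \<otimes>\<^bsub>B\<^esub> y"
  "x \<oplus>\<^bsub>img_plus A B f J\<^esub> y = x \<oplus>\<^bsub>B\<^esub> y"
  "\<one>\<^bsub>img_plus A B f J\<^esub> = \<one>\<^bsub>B\<^esub>"
  "\<zero>\<^bsub>img_plus A B f J\<^esub> = \<zero>\<^bsub>B\<^esub>"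
  by (simp_all add: img_plus_def)

lemma img_plus_nat_pow: "x [^]\<^bsub>img_plus A B f J\<^esub> (n::nat) = x [^]\<^bsub>B\<^esub> n"
  by (induction n) (simp_all add: img_plus_def)

context ring_hom_ring
begin

lemma UP_map_closed:
  assumes "p \<in> carrier (UP R)"
  shows "h \<circ> p \<in> carrier (UP S)"
proof -
  obtain n where "bound \<zero> n p" "p \<in> UNIV \<rightarrow> carrier R"
    using assms by (auto simp: UP_def up_def)
  then have "bound \<zero>\<^bsub>S\<^esub> n (h \<circ> p)" "h \<circ> p \<in> UNIV \<rightarrow> carrier S"
    by (auto simp: bound_def Pi_iff)
  then show ?thesis
    by (auto simp: UP_def up_def)
qed

lemma UP_map_mult:
  assumes p: "p \<in> carrier (UP R)" and q: "q \<in> carrier (UP R)"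
  shows "(h \<circ> p) \<otimes>\<^bsub>UP S\<^esub> (h \<circ> q) = h \<circ> (p \<otimes>\<^bsub>UP R\<^esub> q)"
proof
  fix n
  have "p k \<in> carrier R" "q k \<in> carrier R" for k
    using p q by (auto simp: UP_def up_def)
  then show "((h \<circ> p) \<otimes>\<^bsub>UP S\<^esub> (h \<circ> q)) n = (h \<circ> (p \<otimes>\<^bsub>UP R\<^esub> q)) n"
    using p q UP_map_closed by (simp add: UP_mult_apply comp_def)
qed

lemma UP_map_zero: "h \<circ> \<zero>\<^bsub>UP R\<^esub> = \<zero>\<^bsub>UP S\<^esub>"
  by (simp add: UP_zero_eq comp_def)

lemma img_plus_subring:
  assumes "ideal J S"
  shows "subring (carrier (img_plus R S h J)) S"
proof -
  interpret J: ideal J S by fact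
  have sum: "h a \<oplus>\<^bsub>S\<^esub> j \<in> carrier (img_plus R S h J)" if "a \<in> carrier R" "j \<in> J" for a j
    using that unfolding img_plus_def by auto
  show ?thesis
  proof (rule S.subringI)
    show "carrier (img_plus R S h J) \<subseteq> carrier S"
      by (auto simp: img_plus_def J.Icarr)
    show "\<one>\<^bsub>S\<^esub> \<in> carrier (img_plus R S h J)"
      using sum[of \<one> "\<zero>\<^bsub>S\<^esub>"] by simp
  next
    fix x y
    assume "x \<in> carrier (img_plus R S h J)" "y \<in> carrier (img_plus R S h J)"
    then obtain a b j k where x: "x = h a \<oplus>\<^bsub>S\<^esub> j" "a \<in> carrier R" "j \<in> J"
      and y: "y = h b \<oplus>\<^bsub>S\<^esub> k" "b \<in> carrier R" "k \<in> J"
      unfolding img_plus_def by auto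
    have jk: "j \<in> carrier S" "k \<in> carrier S"
      using x y by (simp_all add: J.Icarr)
    have "\<ominus>\<^bsub>S\<^esub> x = h (\<ominus> a) \<oplus>\<^bsub>S\<^esub> \<ominus>\<^bsub>S\<^esub> j"
      using x jk by (simp add: S.minus_add)
    then show "\<ominus>\<^bsub>S\<^esub> x \<in> carrier (img_plus R S h J)"
      using x by (simp only:) (rule sum, simp_all add: J.a_inv_closed)
    have "x \<oplus>\<^bsub>S\<^esub> y = h (a \<oplus> b) \<oplus>\<^bsub>S\<^esub> (j \<oplus>\<^bsub>S\<^esub> k)"
      using x y jk by (simp add: S.a_ac)
    then show "x \<oplus>\<^bsub>S\<^esub> y \<in> carrier (img_plus R S h J)"
      using x y by (simp only:) (rule sum, simp_all add: J.a_closed)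
    have "x \<otimes>\<^bsub>S\<^esub> y = h (a \<otimes> b) \<oplus>\<^bsub>S\<^esub> (h a \<otimes>\<^bsub>S\<^esub> k \<oplus>\<^bsub>S\<^esub> (j \<otimes>\<^bsub>S\<^esub> h b \<oplus>\<^bsub>S\<^esub> j \<otimes>\<^bsub>S\<^esub> k))"
      using x y jk by (simp add: S.l_distr S.r_distr S.a_ac)
    then show "x \<otimes>\<^bsub>S\<^esub> y \<in> carrier (img_plus R S h J)"
      using x y jk by (simp only:) (rule sum, simp_all add: J.a_closed J.I_l_closed J.I_r_closed)
  qed
qed

lemma amalgamation_subring:
  assumes "ideal J S"
  shows "subring (carrier (amalgamation R S h J)) (RDirProd R S)"
proof -
  interpret J: ideal J S by fact
  interpret P: ring "RDirProd R S"
    by (rule RDirProd_ring) unfold_locales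
  have elem: "(a, h a \<oplus>\<^bsub>S\<^esub> j) \<in> carrier (amalgamation R S h J)" if "a \<in> carrier R" "j \<in> J" for a j
    using that unfolding amalgamation_def by auto
  show ?thesis
  proof (rule P.subringI)
    show "carrier (amalgamation R S h J) \<subseteq> carrier (RDirProd R S)"
      by (auto simp: amalgamation_def RDirProd_carrier J.Icarr)
    show "\<one>\<^bsub>RDirProd R S\<^esub> \<in> carrier (amalgamation R S h J)"
      using elem[of \<one> "\<zero>\<^bsub>S\<^esub>"] by (simp add: RDirProd_simps)
  next
    fix x y
    assume "x \<in> carrier (amalgamation R S h J)" "y \<in> carrier (amalgamation R S h J)"
    then obtain a b j k where x: "x = (a, h a \<oplus>\<^bsub>S\<^esub> j)" "a \<in> carrier R" "j \<in> J"
      and y: "y = (b, h b \<oplus>\<^bsub>S\<^esub> k)" "b \<in> carrier R" "k \<in> J"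
      unfolding amalgamation_def by auto
    have jk: "j \<in> carrier S" "k \<in> carrier S"
      using x y by (simp_all add: J.Icarr)
    have "\<ominus>\<^bsub>RDirProd R S\<^esub> x = (\<ominus> a, \<ominus>\<^bsub>S\<^esub> (h a \<oplus>\<^bsub>S\<^esub> j))"
      using x jk by (intro P.minus_equality) (auto simp: RDirProd_simps RDirProd_carrier R.l_neg S.l_neg)
    also have "\<ominus>\<^bsub>S\<^esub> (h a \<oplus>\<^bsub>S\<^esub> j) = h (\<ominus> a) \<oplus>\<^bsub>S\<^esub> \<ominus>\<^bsub>S\<^esub> j"
      using x jk by (simp add: S.minus_add)
    finally show "\<ominus>\<^bsub>RDirProd R S\<^esub> x \<in> carrier (amalgamation R S h J)"
      using x by (simp only:) (rule elem, simp_all add: J.a_inv_closed)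
    have "x \<oplus>\<^bsub>RDirProd R S\<^esub> y = (a \<oplus> b, h (a \<oplus> b) \<oplus>\<^bsub>S\<^esub> (j \<oplus>\<^bsub>S\<^esub> k))"
      using x y jk by (simp add: RDirProd_simps S.a_ac)
    then show "x \<oplus>\<^bsub>RDirProd R S\<^esub> y \<in> carrier (amalgamation R S h J)"
      using x y by (simp only:) (rule elem, simp_all add: J.a_closed)
    have "x \<otimes>\<^bsub>RDirProd R S\<^esub> y =
        (a \<otimes> b, h (a \<otimes> b) \<oplus>\<^bsub>S\<^esub> (h a \<otimes>\<^bsub>S\<^esub> k \<oplus>\<^bsub>S\<^esub> (j \<otimes>\<^bsub>S\<^esub> h b \<oplus>\<^bsub>S\<^esub> j \<otimes>\<^bsub>S\<^esub> k)))"
      using x y jk by (simp add: RDirProd_simps S.l_distr S.r_distr S.a_ac)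
    then show "x \<otimes>\<^bsub>RDirProd R S\<^esub> y \<in> carrier (amalgamation R S h J)"
      using x y jk by (simp only:) (rule elem, simp_all add: J.a_closed J.I_l_closed J.I_r_closed)
  qed
qed

context
  fixes J
  assumes J: "ideal J S"
begin

lemma img_plus_ring: "ring (img_plus R S h J)"
  using S.subring_is_ring[OF img_plus_subring[OF J]] by (simp add: img_plus_def)

lemma amalgamation_ring: "ring (amalgamation R S h J)"
proof -
  have "ring ((RDirProd R S)\<lparr>carrier := carrier (amalgamation R S h J)\<rparr>)"
    using RDirProd_ring[OF R.ring_axioms S.ring_axioms] amalgamation_subring[OF J]
    by (rule ring.subring_is_ring)
  then show ?thesis
    by (simp add: amalgamation_eq)
qed

lemma amalgamation_fst_hom: "ring_hom_ring (amalgamation R S h J) R fst"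
  by (intro ring_hom_ringI2 amalgamation_ring R.ring_axioms ring_hom_memI)
    (auto simp: amalgamation_def)

lemma amalgamation_snd_hom: "ring_hom_ring (amalgamation R S h J) (img_plus R S h J) snd"
  by (intro ring_hom_ringI2 amalgamation_ring img_plus_ring ring_hom_memI)
    (force simp: amalgamation_def img_plus_def)+

lemma img_plus_nilpotents: "nilpotents (img_plus R S h J) \<subseteq> nilpotents S"
proof
  fix x
  assume "x \<in> nilpotents (img_plus R S h J)"
  then obtain n where "x \<in> carrier (img_plus R S h J)" "x [^]\<^bsub>S\<^esub> (n::nat) = \<zero>\<^bsub>S\<^esub>"
    by (auto simp: nilpotents_def img_plus_nat_pow)
  then show "x \<in> nilpotents S"
    using subringE(1)[OF img_plus_subring[OF J]] unfolding nilpotents_def by blast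
qed

lemma amalgamation_fst_pow_in_ideal:
  assumes x: "x \<in> carrier (amalgamation R S h J)" and nil: "snd x [^]\<^bsub>S\<^esub> (m::nat) = \<zero>\<^bsub>S\<^esub>"
  shows "h (fst x [^] m) \<in> J"
proof -
  interpret J: ideal J S by (rule J)
  interpret M: ring "amalgamation R S h J" by (rule amalgamation_ring)
  obtain j where j: "j \<in> J" "snd x [^]\<^bsub>S\<^esub> m = h (fst x [^] m) \<oplus>\<^bsub>S\<^esub> j" "fst x [^] m \<in> carrier R"
    using M.nat_pow_closed[OF x, of m] unfolding amalgamation_nat_pow by (auto simp: amalgamation_def)
  then have "h (fst x [^] m) = \<ominus>\<^bsub>S\<^esub> j"
    using nil by (intro S.minus_equality[symmetric]) (auto simp: J.Icarr)
  then show ?thesis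
    using j by (simp add: J.a_inv_closed)
qed

lemma amalgamation_nilpotentsI:
  assumes x: "x \<in> carrier (amalgamation R S h J)"
    and "fst x \<in> nilpotents R" and "snd x \<in> nilpotents S"
  shows "x \<in> nilpotents (amalgamation R S h J)"
proof -
  obtain m n where "fst x [^] (m::nat) = \<zero>" "snd x [^]\<^bsub>S\<^esub> (n::nat) = \<zero>\<^bsub>S\<^esub>"
    using assms unfolding nilpotents_def by blast
  then have "fst x [^] (m + n) = \<zero>" "snd x [^]\<^bsub>S\<^esub> (m + n) = \<zero>\<^bsub>S\<^esub>"
    using assms unfolding nilpotents_def
    by (auto intro: R.nat_pow_eq_zero_mono S.nat_pow_eq_zero_mono)
  then show ?thesis
    using x unfolding nilpotents_def by (auto simp: amalgamation_nat_pow)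
qed

lemma amalgamation_snd_coeff_mult_nilpotent:
  assumes F: "weak_armendariz (img_plus R S h J)"
    and P: "P \<in> carrier (UP (amalgamation R S h J))" and Q: "Q \<in> carrier (UP (amalgamation R S h J))"
    and PQ: "P \<otimes>\<^bsub>UP (amalgamation R S h J)\<^esub> Q = \<zero>\<^bsub>UP (amalgamation R S h J)\<^esub>"
  shows "snd (P i) \<otimes>\<^bsub>S\<^esub> snd (Q j) \<in> nilpotents S"
proof -
  interpret snd: ring_hom_ring "amalgamation R S h J" "img_plus R S h J" snd
    by (rule amalgamation_snd_hom)
  have "(snd \<circ> P) \<otimes>\<^bsub>UP (img_plus R S h J)\<^esub> (snd \<circ> Q) = \<zero>\<^bsub>UP (img_plus R S h J)\<^esub>"
    using snd.UP_map_mult[OF P Q] PQ snd.UP_map_zero by simp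
  then have "(snd \<circ> P) i \<otimes>\<^bsub>img_plus R S h J\<^esub> (snd \<circ> Q) j \<in> nilpotents (img_plus R S h J)"
    by (rule F[unfolded weak_armendariz_iff, rule_format,
          OF snd.UP_map_closed[OF P] snd.UP_map_closed[OF Q]])
  then show ?thesis
    using img_plus_nilpotents by auto
qed

lemma amalgamation_fst_coeff_mult_nilpotent:
  assumes semicomm: "semicommutative (R\<lparr>carrier := {a \<in> carrier R. h a \<in> J}\<rparr>)"
    and P: "P \<in> carrier (UP (amalgamation R S h J))" and Q: "Q \<in> carrier (UP (amalgamation R S h J))"
    and PQ: "P \<otimes>\<^bsub>UP (amalgamation R S h J)\<^esub> Q = \<zero>\<^bsub>UP (amalgamation R S h J)\<^esub>"
    and snd_nil: "snd (P i) \<otimes>\<^bsub>S\<^esub> snd (Q j) \<in> nilpotents S"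
  shows "fst (P i) \<otimes> fst (Q j) \<in> nilpotents R"
proof -
  have I: "ideal {a \<in> carrier R. h a \<in> J} R"
    using J by (rule ideal_vimage)
  interpret semicommutative_subrng R "{a \<in> carrier R. h a \<in> J}"
    using I semicomm by (rule R.semicommutative_subrng_ideal)
  interpret M: ring "amalgamation R S h J"
    by (rule amalgamation_ring)
  interpret fst: ring_hom_ring "amalgamation R S h J" R fst
    by (rule amalgamation_fst_hom)
  have PQ_coeffs: "P k \<in> carrier (amalgamation R S h J)" "Q k \<in> carrier (amalgamation R S h J)" for k
    using P Q by (auto simp: UP_def up_def)
  then have fst_coeffs: "fst (P k) \<in> carrier R" "fst (Q k) \<in> carrier R" for k
    by (simp_all add: fst.hom_closed)
  obtain m where "(snd (P i) \<otimes>\<^bsub>S\<^esub> snd (Q j)) [^]\<^bsub>S\<^esub> (m::nat) = \<zero>\<^bsub>S\<^esub>"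
    using snd_nil unfolding nilpotents_def by blast
  then have "h ((fst (P i) \<otimes> fst (Q j)) [^] m) \<in> J"
    using amalgamation_fst_pow_in_ideal[OF M.m_closed[OF PQ_coeffs(1)[of i] PQ_coeffs(2)[of j]]]
    by simp
  then have pow: "(fst (P i) \<otimes> fst (Q j)) [^] m \<in> {a \<in> carrier R. h a \<in> J}"
    using fst_coeffs by simp
  have "(fst \<circ> P) \<otimes>\<^bsub>UP R\<^esub> (fst \<circ> Q) = \<zero>\<^bsub>UP R\<^esub>"
    using fst.UP_map_mult[OF P Q] PQ fst.UP_map_zero by simp
  then have conv: "(\<Oplus>k\<in>{..n}. fst (P k) \<otimes> fst (Q (n - k))) = \<zero>" for n
    using UP_mult_eq_zeroD[OF fst.UP_map_closed[OF P] fst.UP_map_closed[OF Q]] by simp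
  show ?thesis
    using I fst_coeffs conv pow by (rule nilpotents_of_convolution_eq_zero_pow_in_ideal)
qed

end

end

theorem theorem4p1:
  fixes A :: "('a, 'm) ring_scheme" and B :: "('b, 'n) ring_scheme"
    and f :: "'a \<Rightarrow> 'b" and J :: "'b set"
  assumes "ring A" and "ring B"
    and "f \<in> ring_hom A B"
    and "ideal J B" and "J \<noteq> carrier B"
    and "semicommutative (A\<lparr>carrier := {a \<in> carrier A. f a \<in> J}\<rparr>)"
    and "weak_armendariz (img_plus A B f J)"
  shows "weak_armendariz (amalgamation A B f J)"
  unfolding weak_armendariz_iff
proof (intro ballI impI allI)
  interpret ring_hom_ring A B f
    using assms(1-3) by (rule ring_hom_ringI2)
  interpret M: ring "amalgamation A B f J"
    using assms(4) by (rule amalgamation_ring)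
  fix P Q i j
  assume P: "P \<in> carrier (UP (amalgamation A B f J))" and Q: "Q \<in> carrier (UP (amalgamation A B f J))"
    and PQ: "P \<otimes>\<^bsub>UP (amalgamation A B f J)\<^esub> Q = \<zero>\<^bsub>UP (amalgamation A B f J)\<^esub>"
  have "P i \<in> carrier (amalgamation A B f J)" "Q j \<in> carrier (amalgamation A B f J)"
    using P Q by (auto simp: UP_def up_def)
  then have "P i \<otimes>\<^bsub>amalgamation A B f J\<^esub> Q j \<in> carrier (amalgamation A B f J)"
    by (rule M.m_closed)
  moreover have snd_nil: "snd (P i) \<otimes>\<^bsub>B\<^esub> snd (Q j) \<in> nilpotents B"
    by (rule amalgamation_snd_coeff_mult_nilpotent[OF assms(4,7) P Q PQ])
  then have "fst (P i) \<otimes>\<^bsub>A\<^esub> fst (Q j) \<in> nilpotents A"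
    by (rule amalgamation_fst_coeff_mult_nilpotent[OF assms(4,6) P Q PQ])
  ultimately show "P i \<otimes>\<^bsub>amalgamation A B f J\<^esub> Q j \<in> nilpotents (amalgamation A B f J)"
    using snd_nil by (intro amalgamation_nilpotentsI[OF assms(4)]) simp_all
qed

end
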